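(* Let $\beta\in[0,1)$ and let $\xi$ be a random variable with values in $[0,\infty)$. Write $\lfloor x\rfloor_+:=\max\{\lfloor x\rfloor,1\}$. (a) If $\lim_{n\to\infty}n\log n\cdot\mathbb{P}\big(\lceil\xi^{1/(1-\beta)}\rceil=n\big)=0$, then $$\lim_{n\to\infty}\mathbb{E}\Big[\frac{n^\beta\xi\,\mathbf 1\{n-n^\beta\xi\ge1\}}{\lfloor n-n^\beta\xi\rfloor_+}\Big]=0.$$ (b) If $\mathbb{E}[\log_+\xi]<\infty$ (where $\log_+x=\max\{\log x,0\}$), then $$\sum_{n=1}^\infty\frac1n\,\mathbb{E}\Big[\frac{n^\beta\xi\,\mathbf 1\{n-n^\beta\xi\ge1\}}{\lfloor n-n^\beta\xi\rfloor_+}\Big]<\infty.$$ *)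

theory Defs
  imports "HOL-Probability.Probability"
begin

definition floor_plus :: "real \<Rightarrow> int" where
  "floor_plus x = max \<lfloor>x\<rfloor> 1"

text \<open>Positive part of the logarithm, log_+ x = max (log x) 0 (with log 0 = -infinity).\<close>
definition log_plus :: "real \<Rightarrow> real" where
  "log_plus x = (if x \<le> 1 then 0 else ln x)"

definition kernel :: "real \<Rightarrow> nat \<Rightarrow> real \<Rightarrow> real" where
  "kernel \<beta> n x =
     (real n powr \<beta> * x * (if real n - real n powr \<beta> * x \<ge> 1 then 1 else 0))
     / real_of_int (floor_plus (real n - real n powr \<beta> * x))"

end

theory Submission
  imports Defs
begin

text \<open>
  Write \<open>c = 1 - \<beta>\<close>, \<open>y = n powr \<beta> * x\<close> and \<open>N = x powr (1/c)\<close>, so that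
  \<open>y = n * (N/n) powr c\<close>. Concavity of \<open>t powr c\<close> gives \<open>n - y \<ge> c * (n - N)\<close>, hence
  every nonzero term satisfies \<open>c * (n - N) * kernel \<beta> n x \<le> 2 * n\<close>. If \<open>y \<le> n/2\<close> the
  kernel is at most \<open>4 * x * n powr (\<beta> - 1)\<close>; if \<open>y > n/2\<close> then \<open>n < 2 powr (1/c) * N\<close>.

  (a) The terms with \<open>y \<le> n/2\<close> vanish in the mean by dominated convergence. On the event
  \<open>\<lceil>N\<rceil> = n - j\<close>, a term with \<open>y > n/2\<close> is \<open>O(n / (j + 1))\<close> and forces
  \<open>n - j > n / 2 powr (1/c)\<close>. Since \<open>P(\<lceil>N\<rceil> = m) = o(1 / (m ln m))\<close>, its contribution is
  \<open>o(1 / ((j + 1) ln n))\<close>, and the harmonic sum over \<open>j < n\<close> is only \<open>O(ln n)\<close>.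

  (b) For fixed \<open>x\<close> the series of \<open>kernel \<beta> n x / n\<close> telescopes: the terms with
  \<open>y \<le> n/2\<close> against the decreasing potential \<open>min 1 (x * n powr (-c))\<close>, the others against
  the increasing potential \<open>ln (1 + (n - N))\<close> on the range \<open>N < n < 2 powr (1/c) * N\<close>. Its sum
  is therefore \<open>O(1 + log_plus x)\<close>, which is integrable.
\<close>

lemma floor_plus_ge_one: "1 \<le> real_of_int (floor_plus t)"
  unfolding floor_plus_def by simp

lemma floor_plus_ge_half:
  assumes "1 \<le> t"
  shows "t / 2 \<le> real_of_int (floor_plus t)"
proof -
  have "floor_plus t = \<lfloor>t\<rfloor>"
    using assms by (simp add: floor_plus_def)
  moreover have "1 \<le> \<lfloor>t\<rfloor>"
    using assms by linarith
  moreover have "t - 1 < real_of_int \<lfloor>t\<rfloor>"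
    by linarith
  ultimately show ?thesis by linarith
qed

lemma kernel_eq_0: "real n - real n powr \<beta> * x < 1 \<Longrightarrow> kernel \<beta> n x = 0"
  unfolding kernel_def by simp

lemma kernel_nonneg: "0 \<le> x \<Longrightarrow> 0 \<le> kernel \<beta> n x"
  unfolding kernel_def using floor_plus_ge_one[of "real n - real n powr \<beta> * x"]
  by (auto intro!: divide_nonneg_pos)

lemma kernel_le:
  assumes "0 \<le> x" "1 \<le> real n - real n powr \<beta> * x"
  shows kernel_le_mult: "kernel \<beta> n x \<le> real n powr \<beta> * x"
    and kernel_le_ratio: "(real n - real n powr \<beta> * x) * kernel \<beta> n x \<le> 2 * (real n powr \<beta> * x)"
proof -
  define y where "y = real n powr \<beta> * x"
  define t where "t = real n - y"
  have y: "0 \<le> y" and t: "1 \<le> t"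
    using assms unfolding y_def t_def by simp_all
  have k: "kernel \<beta> n x = y / real_of_int (floor_plus t)"
    using assms unfolding kernel_def y_def t_def by simp
  have "y / real_of_int (floor_plus t) \<le> y / 1"
    using floor_plus_ge_one[of t] y by (intro divide_left_mono) auto
  then show "kernel \<beta> n x \<le> y" unfolding y_def[symmetric] using k by simp
  have "y / real_of_int (floor_plus t) \<le> y / (t / 2)"
    using floor_plus_ge_half[OF t] y t by (intro divide_left_mono) auto
  then show "t * kernel \<beta> n x \<le> 2 * y"
    using k t by (simp add: field_simps)
qed

lemma kernel_le_real: "0 \<le> x \<Longrightarrow> kernel \<beta> n x \<le> real n"
  by (cases "1 \<le> real n - real n powr \<beta> * x") (auto dest: kernel_le_mult simp: kernel_eq_0)

lemma powr_concave_Bernoulli: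
  fixes s c :: real
  assumes "0 \<le> s" "0 < c" "c \<le> 1"
  shows "s powr c \<le> 1 + c * (s - 1)"
proof (cases "s = 0")
  case False
  then have "s powr c * 1 powr (1 - c) \<le> c * s + (1 - c) * 1"
    using assms by (intro Youngs_inequality_0) auto
  then show ?thesis by (simp add: algebra_simps)
qed (use assms in simp)

lemma root_powr_cancel: "0 \<le> x \<Longrightarrow> 0 < c \<Longrightarrow> (x powr (1 / c)) powr c = (x::real)"
  by (cases "x = 0") (simp_all add: powr_powr)

lemma powr_mult_eq_scaled_root:
  fixes n x \<beta> :: real
  assumes "0 < n" "0 \<le> x" "\<beta> < 1"
  shows "n powr \<beta> * x = n * (x powr (1/(1-\<beta>)) / n) powr (1-\<beta>)"
proof -
  have "(x powr (1/(1-\<beta>)) / n) powr (1-\<beta>) = x / n powr (1-\<beta>)"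
    using assms by (simp add: powr_divide root_powr_cancel)
  moreover have "n / n powr (1-\<beta>) = n powr \<beta>"
    using assms by (simp add: powr_diff)
  ultimately show ?thesis by (metis times_divide_eq_left times_divide_eq_right)
qed

lemma root_gap_le_powr_gap:
  fixes n x \<beta> :: real
  assumes "0 < n" "0 \<le> x" "0 \<le> \<beta>" "\<beta> < 1"
  shows "(1-\<beta>) * (n - x powr (1/(1-\<beta>))) \<le> n - n powr \<beta> * x"
proof -
  let ?N = "x powr (1/(1-\<beta>))"
  have "n * (?N / n) powr (1-\<beta>) \<le> n * (1 + (1-\<beta>) * (?N/n - 1))"
    using assms by (intro mult_left_mono powr_concave_Bernoulli) auto
  also have "\<dots> = n - (1-\<beta>) * (n - ?N)"
    using assms by (simp add: field_simps)
  finally show ?thesis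
    using powr_mult_eq_scaled_root[OF assms(1,2,4)] by simp
qed

lemma root_less_if_powr_mult_less:
  fixes n x \<beta> :: real
  assumes "0 < n" "0 \<le> x" "\<beta> < 1" "n powr \<beta> * x < n"
  shows "x powr (1/(1-\<beta>)) < n"
proof (rule ccontr)
  assume "\<not> ?thesis"
  then have "1 \<le> (x powr (1/(1-\<beta>)) / n) powr (1-\<beta>)"
    using assms by (intro ge_one_powr_ge_zero) auto
  then show False
    using powr_mult_eq_scaled_root[OF assms(1-3)] assms by simp
qed

lemma less_root_if_powr_mult_gt_half:
  fixes n x \<beta> :: real
  assumes "0 < n" "0 \<le> x" "\<beta> < 1" "n / 2 < n powr \<beta> * x"
  shows "n < 2 powr (1/(1-\<beta>)) * x powr (1/(1-\<beta>))"
proof (rule ccontr)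
  let ?N = "x powr (1/(1-\<beta>))"
  assume "\<not> ?thesis"
  then have "?N / n \<le> (1/2) powr (1/(1-\<beta>))"
    using assms by (simp add: field_simps powr_divide)
  then have "(?N / n) powr (1-\<beta>) \<le> ((1/2) powr (1/(1-\<beta>))) powr (1-\<beta>)"
    using assms by (intro powr_mono2) auto
  also have "\<dots> = 1/2"
    using assms by (intro root_powr_cancel) auto
  finally show False
    using powr_mult_eq_scaled_root[OF assms(1-3)] assms by (simp add: field_simps)
qed

lemma kernel_gap_bound:
  assumes "0 \<le> x" "0 \<le> \<beta>" "\<beta> < 1"
  shows "(1-\<beta>) * (real n - x powr (1/(1-\<beta>))) * kernel \<beta> n x \<le> 2 * real n"
proof (cases "1 \<le> real n - real n powr \<beta> * x")
  case True
  define y where "y = real n powr \<beta> * x"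
  have n: "0 < real n"
    using True assms by (cases "n = 0") auto
  have "(1-\<beta>) * (real n - x powr (1/(1-\<beta>))) * kernel \<beta> n x \<le> (real n - y) * kernel \<beta> n x"
    using root_gap_le_powr_gap[OF n assms] kernel_nonneg[OF assms(1)]
    unfolding y_def by (intro mult_right_mono) auto
  also have "\<dots> \<le> 2 * y"
    using kernel_le_ratio[OF assms(1) True] unfolding y_def .
  also have "\<dots> \<le> 2 * real n"
    using True unfolding y_def by linarith
  finally show ?thesis .
qed (simp add: kernel_eq_0)

lemma kernel_div_le_gap:
  fixes x \<beta> :: real
  defines "c \<equiv> 1 - \<beta>"
  defines "N \<equiv> x powr (1/c)"
  assumes x: "0 \<le> x" and \<beta>: "0 \<le> \<beta>" "\<beta> < 1" and Nn: "N < real n"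
  shows "kernel \<beta> n x / real n \<le> 2 / (c * (real n - N))"
proof -
  have c: "0 < c"
    using \<beta> unfolding c_def by simp
  have n: "0 < real n"
    using Nn powr_ge_zero[of x "1/c"] unfolding N_def by linarith
  have "kernel \<beta> n x * (c * (real n - N)) \<le> 2 * real n"
    using kernel_gap_bound[OF x \<beta>, of n] unfolding N_def c_def by (simp add: mult.commute)
  then have "kernel \<beta> n x \<le> 2 / (c * (real n - N)) * real n"
    using c Nn by (simp add: pos_le_divide_eq)
  then show ?thesis
    using n by (simp add: pos_divide_le_eq)
qed

lemma kernel_le_if_small:
  assumes "0 \<le> x" "0 < n" "real n powr \<beta> * x \<le> real n / 2"
  shows "kernel \<beta> n x \<le> min 2 (4 * real n powr (\<beta> - 1) * x)"
proof (cases "1 \<le> real n - real n powr \<beta> * x")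
  case True
  define y where "y = real n powr \<beta> * x"
  have y: "0 \<le> y" "y \<le> real n / 2"
    using assms unfolding y_def by simp_all
  have "real n / 2 * kernel \<beta> n x \<le> (real n - y) * kernel \<beta> n x"
    using y kernel_nonneg[OF assms(1)] by (intro mult_right_mono) auto
  also have "\<dots> \<le> 2 * y"
    using kernel_le_ratio[OF assms(1) True] unfolding y_def .
  finally have "kernel \<beta> n x \<le> 4 * y / real n"
    using assms by (simp add: field_simps)
  moreover have "4 * y / real n = 4 * real n powr (\<beta> - 1) * x"
    using assms unfolding y_def by (simp add: powr_diff)
  moreover have "4 * y / real n \<le> 2"
    using y assms by (simp add: field_simps)
  ultimately show ?thesis by simp
qed (use assms in \<open>simp add: kernel_eq_0\<close>)

lemma inverse_succ_le_ln_diff: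
  fixes a :: real
  assumes "0 < a"
  shows "1 / (1 + a) \<le> ln (1 + a) - ln a"
proof -
  have "ln (a / (1 + a)) \<le> a / (1 + a) - 1"
    using assms by (intro ln_le_minus_one) auto
  also have "a / (1 + a) - 1 = - (1 / (1 + a))"
    using assms by (simp add: field_simps)
  finally show ?thesis
    using assms by (simp add: ln_div)
qed

lemma powr_neg_decrement_ge:
  fixes n c :: real
  assumes "1 < n" "0 < c"
  shows "c * n powr (-c-1) \<le> (n - 1) powr (-c) - n powr (-c)"
proof -
  have "ln ((n-1)/n) \<le> (n-1)/n - 1"
    using assms by (intro ln_le_minus_one) auto
  then have "1 / n \<le> ln n - ln (n-1)"
    using assms by (simp add: ln_div field_simps)
  then have "c / n \<le> -c * (ln (n-1) - ln n)"
    using mult_left_mono[of "1/n" "ln n - ln (n-1)" c] assms by (simp add: algebra_simps)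
  then have "1 + c / n \<le> exp (-c * (ln (n-1) - ln n))"
    using exp_ge_add_one_self[of "-c * (ln (n-1) - ln n)"] by linarith
  then have "n powr (-c) * (1 + c / n) \<le> n powr (-c) * exp (-c * (ln (n-1) - ln n))"
    by (intro mult_left_mono) auto
  moreover have "n powr (-c) * exp (-c * (ln (n-1) - ln n)) = (n - 1) powr (-c)"
    using assms by (simp add: powr_def exp_add[symmetric] algebra_simps)
  moreover have "n powr (-c) * (1 + c / n) = n powr (-c) + c * n powr (-c-1)"
    using assms by (simp add: powr_diff field_simps powr_minus)
  ultimately show ?thesis by linarith
qed

lemma ln_one_plus_root_le_log_plus:
  fixes x c :: real
  assumes "0 \<le> x" "0 < c" "c \<le> 1"
  shows "ln (1 + 2 powr (1/c) * x powr (1/c)) \<le> (2 + log_plus x) / c"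
proof -
  have L: "2 powr (1/c) * x powr (1/c) = (2*x) powr (1/c)"
    using assms by (simp add: powr_mult)
  have lp0: "0 \<le> log_plus x" and ln2: "ln (2::real) \<le> 1"
    using ln_le_minus_one[of 2] unfolding log_plus_def by auto
  have c1: "1 \<le> 1 / c"
    using assms by (simp add: field_simps)
  show ?thesis
  proof (cases "2 * x \<le> 1")
    case True
    have "(2*x) powr (1/c) \<le> 1 powr (1/c)"
      using True assms by (intro powr_mono2) auto
    then have "ln (1 + (2*x) powr (1/c)) \<le> ln 2"
      by (intro ln_mono) (auto simp: add_pos_nonneg)
    also have "\<dots> \<le> 2 / c"
      using ln2 c1 by (simp add: field_simps)
    also have "2 / c \<le> (2 + log_plus x) / c"
      using lp0 assms by (intro divide_right_mono) auto
    finally show ?thesis using L by simp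
  next
    case False
    then have x0: "0 < x" by simp
    have "1 \<le> (2*x) powr (1/c)"
      using False assms by (intro ge_one_powr_ge_zero) auto
    then have "ln (1 + (2*x) powr (1/c)) \<le> ln (2 * (2*x) powr (1/c))"
      by (intro ln_mono) auto
    also have "\<dots> = ln 2 + (1/c) * (ln 2 + ln x)"
      using x0 by (simp add: ln_mult)
    also have "\<dots> \<le> 1 + (1/c) * (1 + log_plus x)"
      using ln2 assms x0 unfolding log_plus_def
      by (intro add_mono mult_left_mono) auto
    also have "\<dots> \<le> 1/c + (1/c) * (1 + log_plus x)"
      using c1 by linarith
    also have "\<dots> = (2 + log_plus x) / c"
      using assms by (simp add: field_simps)
    finally show ?thesis using L by simp
  qed
qed

text \<open>
  The unit jump of \<open>large_potential\<close> where \<open>m\<close> passes \<open>x powr (1/c)\<close> pays for the first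
  nonzero term beyond that point, where the logarithmic increment is still too small.
\<close>

definition small_potential :: "real \<Rightarrow> real \<Rightarrow> nat \<Rightarrow> real" where
  "small_potential c x m = 4 / c * (if m = 0 then 1 else min 1 (x * real m powr (-c)))"

definition large_potential :: "real \<Rightarrow> real \<Rightarrow> nat \<Rightarrow> real" where
  "large_potential c x m =
     ln (1 + max 0 (min (real m) (2 powr (1/c) * x powr (1/c)) - x powr (1/c)))
     + (if x powr (1/c) < real m then 1 else 0)"

lemma small_potential_nonneg: "0 < c \<Longrightarrow> 0 \<le> x \<Longrightarrow> 0 \<le> small_potential c x m"
  unfolding small_potential_def by auto

lemma small_potential_Suc_le:
  assumes "0 < c" "0 \<le> x"
  shows "small_potential c x (Suc m) \<le> small_potential c x m"
proof (cases m)
  case (Suc m')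
  have "real (Suc m) powr (-c) \<le> real m powr (-c)"
    using assms Suc by (intro powr_mono2') auto
  then have "min 1 (x * real (Suc m) powr (-c)) \<le> min 1 (x * real m powr (-c))"
    using assms by (intro min.mono mult_left_mono) auto
  then show ?thesis
    using assms Suc unfolding small_potential_def by (simp add: divide_right_mono)
qed (use assms in \<open>auto simp: small_potential_def divide_right_mono\<close>)

lemma small_potential_decrement:
  assumes c: "0 < c" "c \<le> 1" and x: "0 \<le> x" and small: "2 * x \<le> real (Suc k) powr c"
  shows "4 * x * real (Suc k) powr (-c-1) \<le> small_potential c x k - small_potential c x (Suc k)"
proof (cases k)
  case 0
  then have "x \<le> 1/2" using small by simp
  then have "small_potential c x 1 \<le> 4/c * (1/2)"
    using c unfolding small_potential_def by (intro mult_left_mono) auto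
  moreover have "4 * x \<le> 2" and "2 \<le> 2 / c"
    using \<open>x \<le> 1/2\<close> c by (simp_all add: field_simps)
  ultimately show ?thesis
    using 0 by (simp add: small_potential_def)
next
  case (Suc k')
  define n where "n = real (Suc k)"
  have kn: "real k = n - 1" and n1: "1 < n"
    using Suc unfolding n_def by simp_all
  have "x * n powr (-c) \<le> 1/2"
    using small n1 unfolding n_def by (simp add: powr_minus field_simps)
  moreover have "x * real k powr (-c) \<le> 1"
  proof -
    have "(n/2) powr c \<le> real k powr c"
      using c n1 kn Suc by (intro powr_mono2) auto
    moreover have "(2::real) powr c \<le> 2 powr 1"
      using c by (intro powr_mono) auto
    then have "n powr c / 2 \<le> n powr c / 2 powr c"
      by (intro divide_left_mono) auto
    then have "n powr c / 2 \<le> (n/2) powr c"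
      by (simp add: powr_divide)
    ultimately have "x \<le> real k powr c"
      using small unfolding n_def by linarith
    then show ?thesis
      using Suc by (simp add: powr_minus field_simps)
  qed
  ultimately have "small_potential c x k - small_potential c x (Suc k)
      = 4/c * x * (real k powr (-c) - n powr (-c))"
    using Suc unfolding small_potential_def n_def by (simp add: algebra_simps)
  also have "\<dots> \<ge> 4/c * x * (c * n powr (-c-1))"
    using powr_neg_decrement_ge[OF n1 c(1)] kn c x by (intro mult_left_mono) auto
  finally show ?thesis
    using c unfolding n_def by simp
qed

lemma large_potential_nonneg: "0 \<le> large_potential c x m"
  unfolding large_potential_def by auto

lemma large_potential_le_Suc: "large_potential c x m \<le> large_potential c x (Suc m)"
proof -
  have "min (real m) (2 powr (1/c) * x powr (1/c)) \<le> min (real (Suc m)) (2 powr (1/c) * x powr (1/c))"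
    by auto
  then show ?thesis
    unfolding large_potential_def by (auto intro!: add_mono ln_mono)
qed

lemma large_potential_le:
  assumes "0 \<le> x" "0 < c" "c \<le> 1"
  shows "large_potential c x m \<le> 1 + (2 + log_plus x) / c"
proof -
  have "min (real m) (2 powr (1/c) * x powr (1/c)) - x powr (1/c) \<le> 2 powr (1/c) * x powr (1/c)"
    using powr_ge_zero[of x "1/c"] min.cobounded2[of "real m" "2 powr (1/c) * x powr (1/c)"]
    by linarith
  then have "max 0 (min (real m) (2 powr (1/c) * x powr (1/c)) - x powr (1/c))
      \<le> 2 powr (1/c) * x powr (1/c)"
    by simp
  then have "ln (1 + max 0 (min (real m) (2 powr (1/c) * x powr (1/c)) - x powr (1/c)))
      \<le> ln (1 + 2 powr (1/c) * x powr (1/c))"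
    by (intro ln_mono) auto
  also have "\<dots> \<le> (2 + log_plus x) / c"
    by (rule ln_one_plus_root_le_log_plus[OF assms])
  finally show ?thesis
    using assms unfolding large_potential_def log_plus_def by auto
qed

lemma large_potential_increment:
  fixes c x :: real
  defines "N \<equiv> x powr (1/c)"
  assumes c: "0 < c" "c \<le> 1" and range: "N < real (Suc k)" "real (Suc k) < 2 powr (1/c) * N"
  shows "min 1 (2 / (c * (real (Suc k) - N)))
    \<le> 8/c * (large_potential c x (Suc k) - large_potential c x k)"
proof (cases "real k \<le> N")
  case True
  then have "large_potential c x k = 0" and "1 \<le> large_potential c x (Suc k)"
    using range unfolding large_potential_def N_def by auto
  moreover have "1 \<le> 8 / c"
    using c by (simp add: field_simps)
  ultimately have "1 \<le> 8/c * (large_potential c x (Suc k) - large_potential c x k)"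
    using mult_left_mono[of 1 "large_potential c x (Suc k)" "8/c"] c by simp
  then show ?thesis
    by linarith
next
  case False
  define a where "a = real (Suc k) - N"
  have a1: "1 < a"
    using False unfolding a_def by simp
  have "large_potential c x (Suc k) = ln (1 + a) + 1"
    using range unfolding large_potential_def a_def N_def by simp
  moreover have "large_potential c x k = ln a + 1"
    using range False unfolding large_potential_def a_def N_def by simp
  ultimately have "8/c * (1 / (1 + a))
      \<le> 8/c * (large_potential c x (Suc k) - large_potential c x k)"
    using inverse_succ_le_ln_diff[of a] a1 c by (intro mult_left_mono) auto
  moreover have "1 / a \<le> 4 * (1 / (1 + a))"
    using a1 by (simp add: field_simps)
  then have "2 / (c * a) \<le> 8/c * (1 / (1 + a))"
    using mult_left_mono[of "1/a" "4 * (1 / (1 + a))" "2/c"] c by simp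
  ultimately show ?thesis
    unfolding a_def by linarith
qed

lemma kernel_div_le_small_potential_decrement:
  fixes x \<beta> :: real and k :: nat
  defines "c \<equiv> 1 - \<beta>"
  defines "n \<equiv> real (Suc k)"
  assumes x: "0 \<le> x" and \<beta>: "0 \<le> \<beta>" "\<beta> < 1" and small: "n powr \<beta> * x \<le> n / 2"
  shows "kernel \<beta> (Suc k) x / n \<le> small_potential c x k - small_potential c x (Suc k)"
proof -
  have c: "0 < c" "c \<le> 1" and n: "0 < n"
    using \<beta> unfolding c_def n_def by auto
  have "kernel \<beta> (Suc k) x \<le> 4 * n powr (\<beta> - 1) * x"
    using kernel_le_if_small[OF x _ small[unfolded n_def]] unfolding n_def by simp
  then have "kernel \<beta> (Suc k) x / n \<le> 4 * n powr (\<beta> - 1) * x / n powr 1"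
    using n by (simp add: divide_right_mono)
  also have "\<dots> = 4 * x * (n powr (\<beta> - 1) / n powr 1)"
    by simp
  also have "n powr (\<beta> - 1) / n powr 1 = n powr (-c-1)"
    unfolding c_def powr_diff[symmetric] by (simp add: algebra_simps)
  also have "4 * x * n powr (-c-1) \<le> small_potential c x k - small_potential c x (Suc k)"
  proof -
    have "2 * x \<le> n powr c"
      using small n unfolding c_def by (simp add: powr_diff field_simps)
    then show ?thesis
      using small_potential_decrement[OF c x] unfolding n_def by blast
  qed
  finally show ?thesis
    unfolding n_def .
qed

lemma kernel_div_le_large_potential_increment:
  fixes x \<beta> :: real and k :: nat
  defines "c \<equiv> 1 - \<beta>"
  defines "n \<equiv> real (Suc k)"
  assumes x: "0 \<le> x" and \<beta>: "0 \<le> \<beta>" "\<beta> < 1"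
    and gap: "1 \<le> n - n powr \<beta> * x" and large: "n / 2 < n powr \<beta> * x"
  shows "kernel \<beta> (Suc k) x / n \<le> 8/c * (large_potential c x (Suc k) - large_potential c x k)"
proof -
  define N where "N = x powr (1/c)"
  have c: "0 < c" "c \<le> 1" and n: "0 < n"
    using \<beta> unfolding c_def n_def by auto
  have Nn: "N < n"
    using root_less_if_powr_mult_less[OF n x \<beta>(2)] gap unfolding N_def c_def by simp
  have "n < 2 powr (1/c) * N"
    using less_root_if_powr_mult_gt_half[OF n x \<beta>(2) large] unfolding N_def c_def .
  then have "min 1 (2 / (c * (n - N))) \<le> 8/c * (large_potential c x (Suc k) - large_potential c x k)"
    using large_potential_increment[OF c] Nn unfolding n_def N_def by simp
  moreover have "kernel \<beta> (Suc k) x / n \<le> 1"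
    using kernel_le_real[OF x, of \<beta> "Suc k"] n unfolding n_def by simp
  moreover have "kernel \<beta> (Suc k) x / n \<le> 2 / (c * (n - N))"
    using kernel_div_le_gap[OF x \<beta>] Nn unfolding n_def N_def c_def .
  ultimately show ?thesis
    by linarith
qed

lemma kernel_div_le_potential_increments:
  fixes x \<beta> :: real
  defines "c \<equiv> 1 - \<beta>"
  assumes x: "0 \<le> x" and \<beta>: "0 \<le> \<beta>" "\<beta> < 1"
  shows "kernel \<beta> (Suc k) x / real (Suc k)
    \<le> (small_potential c x k - small_potential c x (Suc k))
       + 8/c * (large_potential c x (Suc k) - large_potential c x k)"
    (is "?K / ?n \<le> ?\<Delta>small + ?\<Delta>large")
proof -
  have c: "0 < c"
    using \<beta> unfolding c_def by simp
  have increments: "0 \<le> ?\<Delta>small" "0 \<le> ?\<Delta>large"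
    using small_potential_Suc_le[OF c x] large_potential_le_Suc c by auto
  consider "?n - ?n powr \<beta> * x < 1" | "?n powr \<beta> * x \<le> ?n / 2"
    | "1 \<le> ?n - ?n powr \<beta> * x" "?n / 2 < ?n powr \<beta> * x"
    by linarith
  then show ?thesis
  proof cases
    case 1
    then show ?thesis
      using increments by (simp add: kernel_eq_0)
  next
    case 2
    then show ?thesis
      using kernel_div_le_small_potential_decrement[OF x \<beta> 2] increments unfolding c_def
      by linarith
  next
    case 3
    then show ?thesis
      using kernel_div_le_large_potential_increment[OF x \<beta> 3] increments unfolding c_def
      by linarith
  qed
qed

lemma sum_kernel_div_le:
  fixes x \<beta> :: real
  defines "c \<equiv> 1 - \<beta>"
  assumes x: "0 \<le> x" and \<beta>: "0 \<le> \<beta>" "\<beta> < 1"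
  shows "(\<Sum>k<K. kernel \<beta> (Suc k) x / real (Suc k)) \<le> 4/c + 8/c * (1 + (2 + log_plus x) / c)"
proof -
  have c: "0 < c" "c \<le> 1"
    using \<beta> unfolding c_def by auto
  have "(\<Sum>k<K. kernel \<beta> (Suc k) x / real (Suc k))
      \<le> (\<Sum>k<K. (small_potential c x k - small_potential c x (Suc k))
               + 8/c * (large_potential c x (Suc k) - large_potential c x k))"
    using kernel_div_le_potential_increments[OF x \<beta>] unfolding c_def by (intro sum_mono)
  also have "\<dots> = (small_potential c x 0 - small_potential c x K)
      + 8/c * (large_potential c x K - large_potential c x 0)"
  proof -
    have "(\<Sum>k<K. 8/c * (large_potential c x (Suc k) - large_potential c x k))
        = 8/c * (large_potential c x K - large_potential c x 0)"
      by (simp only: sum_distrib_left[symmetric] sum_lessThan_telescope)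
    then show ?thesis
      by (simp add: sum.distrib sum_lessThan_telescope')
  qed
  also have "\<dots> \<le> 4/c + 8/c * (1 + (2 + log_plus x) / c)"
    using small_potential_nonneg[OF c(1) x, of K] large_potential_nonneg[of c x 0]
      large_potential_le[OF x c, of K] c
    by (intro add_mono mult_left_mono) (auto simp: small_potential_def)
  finally show ?thesis .
qed

lemma sets_ceiling_powr_eq:
  fixes \<xi> :: "'a \<Rightarrow> real"
  assumes "\<xi> \<in> borel_measurable M"
  shows "{x \<in> space M. \<lceil>\<xi> x powr e\<rceil> = k} \<in> sets M"
proof -
  have "(\<lambda>x. \<xi> x powr e) \<in> borel_measurable M"
    using assms by measurable
  then have "(\<lambda>x. \<lceil>\<xi> x powr e\<rceil>) \<in> M \<rightarrow>\<^sub>M count_space UNIV"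
    by (rule measurable_compose[OF _ measurable_real_ceiling])
  then have "(\<lambda>x. \<lceil>\<xi> x powr e\<rceil>) -` {k} \<inter> space M \<in> sets M"
    by (rule measurable_sets) simp
  then show ?thesis
    by (simp add: vimage_def Int_def conj_commute)
qed

lemma
  fixes c :: real
  assumes "finite_measure M" and S: "{x \<in> space M. P x} \<in> sets M"
  shows integrable_if_const: "integrable M (\<lambda>x. if P x then c else 0)"
    and integral_if_const: "integral\<^sup>L M (\<lambda>x. if P x then c else 0) = c * measure M {x \<in> space M. P x}"
proof -
  interpret finite_measure M by fact
  let ?S = "{x \<in> space M. P x}"
  have eq: "(if P x then c else 0) = c * indicator ?S x" if "x \<in> space M" for x
    using that by (simp add: indicator_def)
  have "integrable M (\<lambda>x. c * indicator ?S x)"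
    using S by (intro integrable_mult_right integrable_real_indicator) (auto simp: emeasure_eq_measure)
  moreover have "integrable M (\<lambda>x. if P x then c else 0) \<longleftrightarrow> integrable M (\<lambda>x. c * indicator ?S x)"
    by (intro Bochner_Integration.integrable_cong) (simp_all add: eq)
  ultimately show "integrable M (\<lambda>x. if P x then c else 0)"
    by simp
  have "integral\<^sup>L M (\<lambda>x. if P x then c else 0) = integral\<^sup>L M (\<lambda>x. c * indicator ?S x)"
    by (intro Bochner_Integration.integral_cong) (simp_all add: eq)
  also have "\<dots> = c * measure M ?S"
    by (simp add: Int_absorb2)
  finally show "integral\<^sup>L M (\<lambda>x. if P x then c else 0) = c * measure M ?S" .
qed

lemma integrable_kernel:
  fixes \<xi> :: "'a \<Rightarrow> real"
  assumes "finite_measure M" "\<xi> \<in> borel_measurable M" "\<And>x. x \<in> space M \<Longrightarrow> 0 \<le> \<xi> x"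
  shows "integrable M (\<lambda>x. kernel \<beta> n (\<xi> x))"
proof -
  interpret finite_measure M by fact
  have "(\<lambda>x. kernel \<beta> n (\<xi> x)) \<in> borel_measurable M"
    using assms(2) unfolding kernel_def floor_plus_def by measurable
  then show ?thesis
    using assms kernel_nonneg kernel_le_real
    by (intro integrable_const_bound[where B = "real n"]) auto
qed

lemma summable_integral_kernel_div:
  fixes \<xi> :: "'a \<Rightarrow> real"
  assumes M: "finite_measure M" and \<xi>: "\<xi> \<in> borel_measurable M" "\<And>x. x \<in> space M \<Longrightarrow> 0 \<le> \<xi> x"
    and \<beta>: "0 \<le> \<beta>" "\<beta> < 1" and log: "integrable M (\<lambda>x. log_plus (\<xi> x))"
  shows "summable (\<lambda>n. (1 / real (Suc n)) * integral\<^sup>L M (\<lambda>x. kernel \<beta> (Suc n) (\<xi> x)))"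
proof -
  interpret finite_measure M by fact
  define c where "c = 1 - \<beta>"
  define B where "B = (\<lambda>x. 4/c + 8/c * (1 + (2 + log_plus x) / c))"
  have iB: "integrable M (\<lambda>x. B (\<xi> x))"
    unfolding B_def using log by auto
  have ik: "integrable M (\<lambda>x. kernel \<beta> n (\<xi> x) / r)" for n r
    using integrable_kernel[OF M \<xi>] by auto
  show ?thesis
  proof (rule summableI_nonneg_bounded[where x = "integral\<^sup>L M (\<lambda>x. B (\<xi> x))"])
    show "0 \<le> (1 / real (Suc n)) * integral\<^sup>L M (\<lambda>x. kernel \<beta> (Suc n) (\<xi> x))" for n
      using \<xi> kernel_nonneg by (intro mult_nonneg_nonneg Bochner_Integration.integral_nonneg) auto
  next
    fix K
    have "(\<Sum>k<K. (1 / real (Suc k)) * integral\<^sup>L M (\<lambda>x. kernel \<beta> (Suc k) (\<xi> x)))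
        = integral\<^sup>L M (\<lambda>x. \<Sum>k<K. kernel \<beta> (Suc k) (\<xi> x) / real (Suc k))"
      using ik by (subst Bochner_Integration.integral_sum) auto
    also have "\<dots> \<le> integral\<^sup>L M (\<lambda>x. B (\<xi> x))"
      using ik iB \<xi>(2) sum_kernel_div_le[OF _ \<beta>] unfolding B_def c_def
      by (intro integral_mono Bochner_Integration.integrable_sum) auto
    finally show "(\<Sum>k<K. (1 / real (Suc k)) * integral\<^sup>L M (\<lambda>x. kernel \<beta> (Suc k) (\<xi> x)))
        \<le> integral\<^sup>L M (\<lambda>x. B (\<xi> x))" .
  qed
qed

lemma kernel_div_le_index_weight:
  fixes x \<beta> :: real
  defines "c \<equiv> 1 - \<beta>"
  defines "N \<equiv> x powr (1/c)"
  assumes x: "0 \<le> x" and \<beta>: "0 \<le> \<beta>" "\<beta> < 1" and Nn: "N < real n" and j: "real j \<le> real n - N"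
  shows "kernel \<beta> n x / real n \<le> 4 / (c * (real j + 1))"
proof (cases "j = 0")
  case True
  have c: "0 < c" "c \<le> 1"
    using \<beta> unfolding c_def by auto
  have n: "0 < real n"
    using Nn powr_ge_zero[of x "1/c"] unfolding N_def by linarith
  have "c * kernel \<beta> n x \<le> kernel \<beta> n x"
    using c kernel_nonneg[OF x] by (simp add: mult_left_le_one_le)
  then show ?thesis
    using True kernel_le_real[OF x, of \<beta> n] n c by (simp add: field_simps)
next
  case False
  have c: "0 < c"
    using \<beta> unfolding c_def by simp
  have "kernel \<beta> n x / real n \<le> 2 / (c * (real n - N))"
    using kernel_div_le_gap[OF x \<beta> Nn[unfolded N_def c_def]] unfolding N_def c_def .
  also have "\<dots> \<le> 2 / (c * real j)"
    using j c False by (intro divide_left_mono mult_left_mono mult_pos_pos) auto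
  also have "\<dots> \<le> 4 / (c * (real j + 1))"
  proof -
    have "1 / real j \<le> 2 / (real j + 1)"
      using False by (simp add: field_simps)
    then have "2/c * (1 / real j) \<le> 2/c * (2 / (real j + 1))"
      using c by (intro mult_left_mono) auto
    then show ?thesis
      by simp
  qed
  finally show ?thesis .
qed

lemma kernel_le_if_large:
  fixes x \<beta> :: real and n :: nat
  defines "c \<equiv> 1 - \<beta>"
  defines "N \<equiv> x powr (1/c)"
  assumes x: "0 \<le> x" and \<beta>: "0 \<le> \<beta>" "\<beta> < 1" and n: "0 < n"
    and gap: "1 \<le> real n - real n powr \<beta> * x" and large: "real n / 2 < real n powr \<beta> * x"
  obtains j where "j < n" "\<lceil>N\<rceil> = int (n - j)" "real n < 2 powr (1/c) * real (n - j)"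
    "kernel \<beta> n x \<le> 4/c * (real n / (real j + 1))"
proof -
  have c: "0 < c" "c \<le> 1" and n0: "0 < real n"
    using \<beta> n unfolding c_def by auto
  have Nn: "N < real n"
    using root_less_if_powr_mult_less[OF n0 x \<beta>(2)] gap unfolding N_def c_def by simp
  have nN: "real n < 2 powr (1/c) * N"
    using less_root_if_powr_mult_gt_half[OF n0 x \<beta>(2) large] unfolding N_def c_def .
  have "0 < N"
  proof (rule ccontr)
    assume "\<not> 0 < N"
    then have "2 powr (1/c) * N \<le> 0"
      by (simp add: mult_nonneg_nonpos)
    then show False
      using nN n0 by linarith
  qed
  define j where "j = n - nat \<lceil>N\<rceil>"
  have j: "j < n" "n - j = nat \<lceil>N\<rceil>" "real j \<le> real n - N"
    using \<open>0 < N\<close> Nn unfolding j_def by linarith+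
  have "2 powr (1/c) * N \<le> 2 powr (1/c) * real (n - j)"
    using j(2) by (intro mult_left_mono) (linarith, simp)
  then have "real n < 2 powr (1/c) * real (n - j)"
    using nN by linarith
  moreover have "\<lceil>N\<rceil> = int (n - j)"
    using j(2) \<open>0 < N\<close> by linarith
  moreover have "kernel \<beta> n x / real n \<le> 4 / (c * (real j + 1))"
    using kernel_div_le_index_weight[OF x \<beta>] Nn j(3) unfolding N_def c_def .
  then have "kernel \<beta> n x \<le> 4/c * (real n / (real j + 1))"
    using n0 c by (simp add: pos_divide_le_eq field_simps)
  ultimately show ?thesis
    using that j(1) by blast
qed

lemma kernel_le_min_plus_sum:
  fixes x \<beta> :: real and n :: nat
  defines "c \<equiv> 1 - \<beta>"
  assumes x: "0 \<le> x" and \<beta>: "0 \<le> \<beta>" "\<beta> < 1" and n: "1 \<le> n"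
  shows "kernel \<beta> n x \<le> min 2 (4 * real n powr (\<beta> - 1) * x) + 4/c *
    (\<Sum>j<n. if real n < 2 powr (1/c) * real (n - j)
            then (if \<lceil>x powr (1/c)\<rceil> = int (n - j) then real n / (real j + 1) else 0) else 0)"
    (is "?K \<le> ?small + 4/c * ?sum")
proof -
  have c: "0 < c"
    using \<beta> unfolding c_def by simp
  have "0 \<le> ?sum"
    by (intro sum_nonneg) auto
  then have sum_nonneg: "0 \<le> 4/c * ?sum"
    using c by simp
  have small_nonneg: "0 \<le> ?small"
    using x by simp
  consider "real n - real n powr \<beta> * x < 1" | "real n powr \<beta> * x \<le> real n / 2"
    | "1 \<le> real n - real n powr \<beta> * x" "real n / 2 < real n powr \<beta> * x"
    by linarith
  then show ?thesis
  proof cases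
    case 1
    then show ?thesis
      using sum_nonneg small_nonneg by (simp add: kernel_eq_0)
  next
    case 2
    then have "?K \<le> ?small"
      using kernel_le_if_small[OF x] n by simp
    then show ?thesis
      using sum_nonneg by linarith
  next
    case 3
    with n obtain j where j: "j < n" "\<lceil>x powr (1/c)\<rceil> = int (n - j)"
      "real n < 2 powr (1/c) * real (n - j)" "?K \<le> 4/c * (real n / (real j + 1))"
      using kernel_le_if_large[OF x \<beta>] unfolding c_def by (metis less_le_trans zero_less_one)
    have "real n / (real j + 1) = (if real n < 2 powr (1/c) * real (n - j)
        then (if \<lceil>x powr (1/c)\<rceil> = int (n - j) then real n / (real j + 1) else 0) else 0)"
      using j by simp
    also have "\<dots> \<le> ?sum"
      using j(1) by (intro member_le_sum) auto
    finally have "4/c * (real n / (real j + 1)) \<le> 4/c * ?sum"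
      using c by (intro mult_left_mono) auto
    then show ?thesis
      using j(4) small_nonneg by linarith
  qed
qed

lemma integral_kernel_le:
  fixes \<xi> :: "'a \<Rightarrow> real" and \<beta> :: real
  defines "c \<equiv> 1 - \<beta>"
  assumes M: "finite_measure M" and \<xi>: "\<xi> \<in> borel_measurable M" "\<And>x. x \<in> space M \<Longrightarrow> 0 \<le> \<xi> x"
    and \<beta>: "0 \<le> \<beta>" "\<beta> < 1" and n: "1 \<le> n"
  shows "integral\<^sup>L M (\<lambda>x. kernel \<beta> n (\<xi> x))
    \<le> integral\<^sup>L M (\<lambda>x. min 2 (4 * real n powr (\<beta> - 1) * \<xi> x)) + 4/c *
      (\<Sum>j<n. if real n < 2 powr (1/c) * real (n - j)
        then real n / (real j + 1) * measure M {x \<in> space M. \<lceil>\<xi> x powr (1/c)\<rceil> = int (n - j)}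
        else 0)"
proof -
  interpret finite_measure M by fact
  define f where "f = (\<lambda>j x. if real n < 2 powr (1/c) * real (n - j)
    then (if \<lceil>\<xi> x powr (1/c)\<rceil> = int (n - j) then real n / (real j + 1) else 0) else 0)"
  have sets: "{x \<in> space M. \<lceil>\<xi> x powr (1/c)\<rceil> = int (n - j)} \<in> sets M" for j
    using sets_ceiling_powr_eq[OF \<xi>(1)] .
  have int_f: "integrable M (f j)" for j
    unfolding f_def
    by (cases "real n < 2 powr (1/c) * real (n - j)")
      (simp_all only: if_True if_False integrable_zero integrable_if_const[OF M sets])
  have integral_f: "integral\<^sup>L M (f j) = (if real n < 2 powr (1/c) * real (n - j)
      then real n / (real j + 1) * measure M {x \<in> space M. \<lceil>\<xi> x powr (1/c)\<rceil> = int (n - j)}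
      else 0)" for j
    unfolding f_def
    by (cases "real n < 2 powr (1/c) * real (n - j)")
      (simp_all only: if_True if_False integral_zero integral_if_const[OF M sets])
  have int_small: "integrable M (\<lambda>x. min 2 (4 * real n powr (\<beta> - 1) * \<xi> x))"
    using \<xi> by (intro integrable_const_bound[where B = 2]) auto
  have int_f_sum: "integrable M (\<lambda>x. 4/c * (\<Sum>j<n. f j x))"
    by (intro integrable_mult_right Bochner_Integration.integrable_sum int_f)
  have "kernel \<beta> n (\<xi> x) \<le> min 2 (4 * real n powr (\<beta> - 1) * \<xi> x) + 4/c * (\<Sum>j<n. f j x)"
    if "x \<in> space M" for x
    using kernel_le_min_plus_sum[OF \<xi>(2)[OF that] \<beta> n] unfolding f_def c_def .
  then have "integral\<^sup>L M (\<lambda>x. kernel \<beta> n (\<xi> x))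
      \<le> integral\<^sup>L M (\<lambda>x. min 2 (4 * real n powr (\<beta> - 1) * \<xi> x) + 4/c * (\<Sum>j<n. f j x))"
    by (intro integral_mono integrable_kernel[OF M \<xi>] Bochner_Integration.integrable_add
        int_small int_f_sum)
  also have "\<dots> = integral\<^sup>L M (\<lambda>x. min 2 (4 * real n powr (\<beta> - 1) * \<xi> x))
      + 4/c * (\<Sum>j<n. integral\<^sup>L M (f j))"
    by (simp only: Bochner_Integration.integral_add[OF int_small int_f_sum] integral_mult_right_zero
        Bochner_Integration.integral_sum[OF int_f])
  finally show ?thesis
    unfolding integral_f .
qed

lemma integral_min_tendsto_0:
  fixes f :: "'a \<Rightarrow> real" and a :: "nat \<Rightarrow> real"
  assumes M: "finite_measure M" and f: "f \<in> borel_measurable M" "\<And>x. x \<in> space M \<Longrightarrow> 0 \<le> f x"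
    and a: "a \<longlonglongrightarrow> 0" "\<And>n. 0 \<le> a n" and C: "0 \<le> C"
  shows "(\<lambda>n. integral\<^sup>L M (\<lambda>x. min C (a n * f x))) \<longlonglongrightarrow> 0"
proof -
  interpret finite_measure M by fact
  have "(\<lambda>n. integral\<^sup>L M (\<lambda>x. min C (a n * f x))) \<longlonglongrightarrow> integral\<^sup>L M (\<lambda>x. 0)"
  proof (rule integral_dominated_convergence[where w = "\<lambda>x. C"])
    show "AE x in M. (\<lambda>n. min C (a n * f x)) \<longlonglongrightarrow> 0"
      using tendsto_min[OF tendsto_const tendsto_mult_left_zero[OF a(1)], of C] C
      by (simp add: min_absorb2)
    show "AE x in M. norm (min C (a n * f x)) \<le> C" for n
      using f(2) a(2) C by auto
  qed (use f in auto)
  then show ?thesis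
    by simp
qed

lemma mult_ln_le_scaled:
  fixes n m A :: real
  assumes A: "1 \<le> A" and n: "A * A \<le> n" and m: "n < A * m"
  shows "n * ln n \<le> 2 * A * (m * ln m)"
proof -
  have nA: "A \<le> n / A" "n / A \<le> m"
    using A n m by (simp_all add: field_simps)
  have "1 \<le> A * A"
    using A mult_mono[of 1 A 1 A] by simp
  then have "0 \<le> n" "A \<le> n"
    using n A mult_left_mono[of 1 A A] by linarith+
  have "2 * ln A \<le> ln n"
    using A n ln_mono[of "A * A" n] by (simp add: ln_mult)
  then have "ln n \<le> 2 * ln (n / A)"
    using A n by (simp add: ln_div)
  have "n * ln n = A * (n / A) * ln n"
    using A by simp
  also have "\<dots> \<le> A * (n / A) * (2 * ln (n / A))"
    using \<open>ln n \<le> 2 * ln (n / A)\<close> A \<open>0 \<le> n\<close> by (intro mult_left_mono) auto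
  also have "\<dots> = 2 * A * (n / A * ln (n / A))"
    by simp
  also have "\<dots> \<le> 2 * A * (m * ln m)"
    using A nA \<open>A \<le> n\<close> by (intro mult_left_mono mult_mono ln_mono) auto
  finally show ?thesis .
qed

lemma harm_le_one_plus_ln: "1 \<le> n \<Longrightarrow> harm n \<le> 1 + ln (real n)"
proof (induction n rule: dec_induct)
  case (step n)
  have "1 / (1 + real n) \<le> ln (1 + real n) - ln (real n)"
    using step by (intro inverse_succ_le_ln_diff) auto
  then show ?case
    using step by (simp add: harm_Suc add.commute inverse_eq_divide)
qed (simp add: harm_def)

lemma harmonic_convolution_le:
  fixes P :: "nat \<Rightarrow> real" and A \<epsilon> :: real
  assumes A: "1 \<le> A" and P: "\<And>m. 0 \<le> P m" and n: "A * A \<le> real n" "3 \<le> real n"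
    and \<epsilon>: "0 \<le> \<epsilon>" and small: "\<And>m. real n < A * real m \<Longrightarrow> real m * ln (real m) * P m \<le> \<epsilon>"
  shows "(\<Sum>j<n. if real n < A * real (n - j) then real n / (real j + 1) * P (n - j) else 0)
    \<le> 4 * A * \<epsilon>"
proof -
  have ln_n: "1 \<le> ln (real n)"
    using n(2) exp_le ln_mono[of "exp 1" "real n"] by simp
  define K where "K = 2 * A * \<epsilon> / ln (real n)"
  have K: "0 \<le> K"
    using A \<epsilon> ln_n unfolding K_def by simp
  have term_le: "(if real n < A * real (n - j) then real n / (real j + 1) * P (n - j) else 0)
      \<le> K * (1 / (real j + 1))" for j
  proof (cases "real n < A * real (n - j)")
    case True
    have "real n * ln (real n) * P (n - j) \<le> 2 * A * (real (n - j) * ln (real (n - j))) * P (n - j)"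
      using mult_ln_le_scaled[OF A n(1) True] P by (intro mult_right_mono)
    also have "\<dots> \<le> 2 * A * \<epsilon>"
      using small[OF True] A by (simp add: mult.assoc)
    finally have "real n * P (n - j) \<le> K"
      using ln_n unfolding K_def by (simp add: pos_le_divide_eq mult.commute mult.left_commute)
    then have "real n / (real j + 1) * P (n - j) \<le> K * (1 / (real j + 1))"
      by (simp add: divide_right_mono)
    then show ?thesis
      unfolding if_P[OF True] .
  next
    case False
    then show ?thesis
      using K by simp
  qed
  have "(\<Sum>j<n. if real n < A * real (n - j) then real n / (real j + 1) * P (n - j) else 0)
      \<le> (\<Sum>j<n. K * (1 / (real j + 1)))"
    by (intro sum_mono term_le)
  also have "\<dots> = K * harm n"
    by (simp add: harm_altdef sum_distrib_left inverse_eq_divide add.commute)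
  also have "\<dots> \<le> K * (2 * ln (real n))"
    using harm_le_one_plus_ln[of n] n(2) ln_n K by (intro mult_left_mono) auto
  also have "\<dots> = 4 * A * \<epsilon>"
    using ln_n unfolding K_def by simp
  finally show ?thesis .
qed

lemma harmonic_convolution_tendsto_0:
  fixes P :: "nat \<Rightarrow> real" and A :: real
  assumes A: "1 \<le> A" and P: "\<And>m. 0 \<le> P m" and tail: "(\<lambda>n. real n * ln (real n) * P n) \<longlonglongrightarrow> 0"
  shows "(\<lambda>n. \<Sum>j<n. if real n < A * real (n - j) then real n / (real j + 1) * P (n - j) else 0)
    \<longlonglongrightarrow> 0"
proof (rule LIMSEQ_I)
  fix r :: real
  assume r: "0 < r"
  define \<epsilon> where "\<epsilon> = r / (8 * A)"
  have \<epsilon>: "0 < \<epsilon>"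
    using r A unfolding \<epsilon>_def by simp
  then obtain M0 where M0: "\<And>m. M0 \<le> m \<Longrightarrow> \<bar>real m * ln (real m) * P m\<bar> < \<epsilon>"
    using LIMSEQ_D[OF tail] by auto
  show "\<exists>n0. \<forall>n\<ge>n0. norm ((\<Sum>j<n. if real n < A * real (n - j)
      then real n / (real j + 1) * P (n - j) else 0) - 0) < r"
  proof (intro exI allI impI)
    fix n
    assume "nat \<lceil>A * A + A * real M0 + 3\<rceil> \<le> n"
    then have "A * A + A * real M0 + 3 \<le> real n"
      using real_nat_ceiling_ge[of "A * A + A * real M0 + 3"] of_nat_mono by fastforce
    moreover have "0 \<le> A * A" "0 \<le> A * real M0"
      using A by simp_all
    ultimately have n: "A * A \<le> real n" "A * real M0 \<le> real n" "3 \<le> real n"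
      by linarith+
    have "real m * ln (real m) * P m \<le> \<epsilon>" if "real n < A * real m" for m
    proof -
      have "A * real M0 < A * real m"
        using n(2) that by linarith
      then have "M0 \<le> m"
        using A by (simp add: mult_less_cancel_left_pos)
      then show ?thesis
        using M0 by fastforce
    qed
    then have "(\<Sum>j<n. if real n < A * real (n - j) then real n / (real j + 1) * P (n - j) else 0)
        \<le> 4 * A * \<epsilon>" (is "?S \<le> _")
      using \<epsilon> by (intro harmonic_convolution_le[OF A P n(1,3)]) auto
    also have "\<dots> < r"
      using r A unfolding \<epsilon>_def by simp
    finally have "?S < r" .
    moreover have "0 \<le> ?S"
      using P by (intro sum_nonneg) auto
    ultimately show "norm (?S - 0) < r"
      by (simp only: diff_zero real_norm_def abs_of_nonneg)
  qed
qed

lemma integral_kernel_tendsto_0: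
  fixes M :: "'a measure" and \<xi> :: "'a \<Rightarrow> real" and \<beta> :: real
  defines "c \<equiv> 1 - \<beta>"
  defines "P \<equiv> \<lambda>m. measure M {x \<in> space M. \<lceil>\<xi> x powr (1/c)\<rceil> = int m}"
  assumes M: "finite_measure M" and \<xi>: "\<xi> \<in> borel_measurable M" "\<And>x. x \<in> space M \<Longrightarrow> 0 \<le> \<xi> x"
    and \<beta>: "0 \<le> \<beta>" "\<beta> < 1" and tail: "(\<lambda>n. real n * ln (real n) * P n) \<longlonglongrightarrow> 0"
  shows "(\<lambda>n. integral\<^sup>L M (\<lambda>x. kernel \<beta> n (\<xi> x))) \<longlonglongrightarrow> 0"
proof -
  define D where "D = (\<lambda>n. integral\<^sup>L M (\<lambda>x. min 2 (4 * real n powr (\<beta> - 1) * \<xi> x)))"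
  define S where "S = (\<lambda>n. \<Sum>j<n. if real n < 2 powr (1/c) * real (n - j)
    then real n / (real j + 1) * P (n - j) else 0)"
  have "(\<lambda>n. 4 * real n powr (\<beta> - 1)) \<longlonglongrightarrow> 0"
    using \<beta> by (intro tendsto_mult_right_zero tendsto_neg_powr filterlim_real_sequentially) auto
  then have "D \<longlonglongrightarrow> 0"
    unfolding D_def using \<xi> by (intro integral_min_tendsto_0[OF M]) auto
  moreover have "S \<longlonglongrightarrow> 0"
    unfolding S_def
  proof (rule harmonic_convolution_tendsto_0[OF _ _ tail])
    show "1 \<le> 2 powr (1/c)"
      using \<beta> unfolding c_def by (intro ge_one_powr_ge_zero) auto
  qed (simp add: P_def)
  ultimately have "(\<lambda>n. D n + 4/c * S n) \<longlonglongrightarrow> 0 + 0"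
    by (intro tendsto_add tendsto_mult_right_zero)
  moreover have "\<forall>\<^sub>F n in sequentially. integral\<^sup>L M (\<lambda>x. kernel \<beta> n (\<xi> x)) \<le> D n + 4/c * S n"
  proof (rule eventually_sequentiallyI[of 1])
    fix n :: nat
    assume "1 \<le> n"
    show "integral\<^sup>L M (\<lambda>x. kernel \<beta> n (\<xi> x)) \<le> D n + 4/c * S n"
      unfolding D_def S_def P_def c_def by (rule integral_kernel_le[OF M \<xi> \<beta> \<open>1 \<le> n\<close>])
  qed
  moreover have "\<forall>\<^sub>F n in sequentially. 0 \<le> integral\<^sup>L M (\<lambda>x. kernel \<beta> n (\<xi> x))"
    using \<xi>(2) kernel_nonneg by (intro always_eventually allI Bochner_Integration.integral_nonneg) auto
  ultimately show ?thesis
    using tendsto_sandwich[OF _ _ tendsto_const] by simp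
qed

theorem mainTheorem6:
  fixes M :: "'a measure" and \<xi> :: "'a \<Rightarrow> real" and \<beta> :: real
  assumes "prob_space M"
    and "\<xi> \<in> borel_measurable M"
    and "\<And>x. x \<in> space M \<Longrightarrow> \<xi> x \<ge> 0"
    and "0 \<le> \<beta>" and "\<beta> < 1"
  shows
    "(((\<lambda>n::nat. real n * ln (real n) *
         measure M {x \<in> space M. \<lceil>\<xi> x powr (1 / (1 - \<beta>))\<rceil> = int n}) \<longlonglongrightarrow> 0)
       \<longrightarrow> ((\<lambda>n::nat. integral\<^sup>L M (\<lambda>x. kernel \<beta> n (\<xi> x))) \<longlonglongrightarrow> 0))
     \<and> (integrable M (\<lambda>x. log_plus (\<xi> x))
       \<longrightarrow> summable (\<lambda>n::nat. (1 / real (Suc n)) * integral\<^sup>L M (\<lambda>x. kernel \<beta> (Suc n) (\<xi> x))))"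
  using integral_kernel_tendsto_0[OF prob_space.finite_measure assms(2-5)]
    summable_integral_kernel_div[OF prob_space.finite_measure assms(2-5)] assms(1)
  by blast

end
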